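(* Let $K_t(\omega)$ be a weighted complete graph on $[t]$. Suppose $K_t(\omega)$ contains $p$ copies of $C_5$, $q$ copies of $K_4$, $r$ copies of $K_3$ and $s$ single edges, such that all these $p+q+r+s$ subgraphs are pairwise vertex-disjoint and each of them is half (every edge of each of these subgraphs has weight $\frac12$). Then $$2g(K_t(\omega))\le 1-\frac{30}{30t-75p-72q-45r-20s}.$$
   Context: A weighted complete graph $K_t(\omega)$ is the complete graph on vertex set $[t]$ in which every edge $ij$ has a weight $\omega(i,j)\in\{\frac12,1\}$; an edge is called half if its weight is $\frac12$ and full if its weight is $1$, and a subgraph is half if all its edges are half. Its edge density is $g(K_t(\omega))=\max_{\mathbf u}\sum_{1\le i<j\le t}\omega(i,j)u_iu_j$, the maximum taken over all $\mathbf u=(u_1,\dots,u_t)$ with $u_i\ge 0$ and $\sum_i u_i=1$. *)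

theory Defs
  imports Complex_Main
begin

definition weighted_complete_graph :: "nat \<Rightarrow> (nat \<Rightarrow> nat \<Rightarrow> real) \<Rightarrow> bool" where
  "weighted_complete_graph t \<omega> \<longleftrightarrow>
     (\<forall>i\<in>{1..t}. \<forall>j\<in>{1..t}. i \<noteq> j \<longrightarrow> \<omega> i j = \<omega> j i \<and> \<omega> i j \<in> {1/2, 1})"

definition simplex :: "nat \<Rightarrow> (nat \<Rightarrow> real) set" where
  "simplex t = {u. (\<forall>i\<in>{1..t}. 0 \<le> u i) \<and> (\<Sum>i=1..t. u i) = 1}"

text \<open>Edge density g(K_t(omega)) = max over the simplex of sum_{i<j} omega(i,j) u_i u_j
  (the maximum is attained by compactness, so it equals the supremum).\<close>
definition edge_density :: "nat \<Rightarrow> (nat \<Rightarrow> nat \<Rightarrow> real) \<Rightarrow> real" where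
  "edge_density t \<omega> =
     Sup ((\<lambda>u. \<Sum>i=1..t. \<Sum>j=i+1..t. \<omega> i j * u i * u j) ` simplex t)"

definition half_C5 :: "nat \<Rightarrow> (nat \<Rightarrow> nat \<Rightarrow> real) \<Rightarrow> (nat \<Rightarrow> nat) \<Rightarrow> bool" where
  "half_C5 t \<omega> c \<longleftrightarrow> inj_on c {0..<5} \<and> c ` {0..<5} \<subseteq> {1..t} \<and>
     (\<forall>j<5. \<omega> (c j) (c ((j + 1) mod 5)) = 1/2)"

definition half_clique :: "nat \<Rightarrow> (nat \<Rightarrow> nat \<Rightarrow> real) \<Rightarrow> nat \<Rightarrow> nat set \<Rightarrow> bool" where
  "half_clique t \<omega> k A \<longleftrightarrow> A \<subseteq> {1..t} \<and> card A = k \<and>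
     (\<forall>i\<in>A. \<forall>j\<in>A. i \<noteq> j \<longrightarrow> \<omega> i j = 1/2)"

end

theory Submission
  imports Defs "HOL-Library.Disjoint_Sets" "HOL-Analysis.Convex"
begin

text \<open>
  For u in the simplex, 1 - 2 sum_{i<j} w(i,j) u_i u_j is the sum over all vertices i of the
  deficit u_i^2 + sum_{j /= i} (1 - w(i,j)) u_i u_j, all of whose terms are nonnegative.
  Say that a vertex set B has cost a if 2 l u(B) - a l^2 is at most the deficit of B for every
  real l. Keeping only the half edges inside B, a single vertex has cost 1, a half K_k has cost
  2k/(k+1) (by Cauchy-Schwarz) and a half C_5 has cost 5/2 (its deficit dominates half the sum
  of (u_a + u_b - l)^2 over its edges). Partitioning [t] into the given subgraphs and the
  remaining single vertices, the total deficit is at least 2 l - D l^2 with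
  D = t - 5p/2 - 12q/5 - 3r/2 - 2s/3, and l = 1/D gives the bound 1/D.
\<close>

lemma two_mul_le_scaled_squares:
  fixes l m c :: real
  assumes "0 < c"
  shows "2 * l * m \<le> c * m\<^sup>2 + l\<^sup>2 / c"
proof -
  have "0 \<le> (c * m - l)\<^sup>2 / c" using assms by simp
  also have "\<dots> = c * m\<^sup>2 + l\<^sup>2 / c - 2 * l * m"
    using assms by (simp add: power2_eq_square field_simps)
  finally show ?thesis by simp
qed

lemma sum_off_diagonal_symmetric:
  fixes F :: "'a::linorder \<Rightarrow> 'a \<Rightarrow> 'b::semiring_1"
  assumes "finite A" and sym: "\<And>i j. i \<in> A \<Longrightarrow> j \<in> A \<Longrightarrow> F i j = F j i"
  shows "(\<Sum>i\<in>A. \<Sum>j\<in>A - {i}. F i j) = 2 * (\<Sum>i\<in>A. \<Sum>j\<in>{j\<in>A. i < j}. F i j)"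
proof -
  have "(\<Sum>j\<in>A - {i}. F i j) = (\<Sum>j\<in>{j\<in>A. i < j}. F i j) + (\<Sum>j\<in>{j\<in>A. j < i}. F i j)" for i
  proof -
    have "(\<Sum>j\<in>A - {i}. F i j) = (\<Sum>j\<in>{j\<in>A. i < j} \<union> {j\<in>A. j < i}. F i j)"
      by (rule sum.cong) auto
    also have "\<dots> = (\<Sum>j\<in>{j\<in>A. i < j}. F i j) + (\<Sum>j\<in>{j\<in>A. j < i}. F i j)"
      by (rule sum.union_disjoint) (use assms(1) in auto)
    finally show ?thesis .
  qed
  then have "(\<Sum>i\<in>A. \<Sum>j\<in>A - {i}. F i j)
      = (\<Sum>i\<in>A. \<Sum>j\<in>{j\<in>A. i < j}. F i j) + (\<Sum>i\<in>A. \<Sum>j\<in>{j\<in>A. j < i}. F i j)"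
    by (simp add: sum.distrib)
  also have "(\<Sum>i\<in>A. \<Sum>j\<in>{j\<in>A. j < i}. F i j) = (\<Sum>j\<in>A. \<Sum>i\<in>{i\<in>A. j < i}. F i j)"
    by (rule sum.swap_restrict[OF assms(1) assms(1)])
  also have "\<dots> = (\<Sum>i\<in>A. \<Sum>j\<in>{j\<in>A. i < j}. F i j)"
    by (intro sum.cong refl) (metis sym mem_Collect_eq)
  finally show ?thesis by (simp add: mult_2)
qed

lemma sum_lessThan_add:
  fixes f :: "nat \<Rightarrow> 'a::comm_monoid_add"
  shows "(\<Sum>m<a + b. f m) = (\<Sum>m<a. f m) + (\<Sum>m<b. f (a + m))"
  by (induction b) (simp_all add: add_ac)

lemma edge_density_le:
  assumes "1 \<le> t" and "\<And>u. u \<in> simplex t \<Longrightarrow> (\<Sum>i=1..t. \<Sum>j=i+1..t. \<omega> i j * u i * u j) \<le> x"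
  shows "edge_density t \<omega> \<le> x"
proof -
  have "(\<lambda>i. if i = 1 then 1 else 0) \<in> simplex t"
    using assms(1) by (simp add: simplex_def)
  then show ?thesis
    unfolding edge_density_def using assms(2) by (intro cSup_least) auto
qed

definition deficit :: "nat \<Rightarrow> (nat \<Rightarrow> nat \<Rightarrow> real) \<Rightarrow> (nat \<Rightarrow> real) \<Rightarrow> nat \<Rightarrow> real" where
  "deficit t \<omega> u i = (u i)\<^sup>2 + (\<Sum>j\<in>{1..t} - {i}. (1 - \<omega> i j) * u i * u j)"

lemma deficit_ge_partial:
  assumes wg: "weighted_complete_graph t \<omega>" and u: "\<forall>j\<in>{1..t}. 0 \<le> u j"
    and i: "i \<in> {1..t}" and J: "J \<subseteq> {1..t} - {i}"
  shows "(u i)\<^sup>2 + (\<Sum>j\<in>J. (1 - \<omega> i j) * u i * u j) \<le> deficit t \<omega> u i"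
proof -
  have "(\<Sum>j\<in>J. (1 - \<omega> i j) * u i * u j) \<le> (\<Sum>j\<in>{1..t} - {i}. (1 - \<omega> i j) * u i * u j)"
  proof (rule sum_mono2)
    fix j assume j: "j \<in> {1..t} - {i} - J"
    then have "\<omega> i j \<in> {1/2, 1}" using wg i unfolding weighted_complete_graph_def by auto
    then have "\<omega> i j \<le> 1" by auto
    then show "0 \<le> (1 - \<omega> i j) * u i * u j" using u i j by simp
  qed (use J in auto)
  then show ?thesis unfolding deficit_def by simp
qed

lemma two_weighted_edge_sum_eq:
  assumes wg: "weighted_complete_graph t \<omega>"
  shows "2 * (\<Sum>i=1..t. \<Sum>j=i+1..t. \<omega> i j * u i * u j)
       = (\<Sum>i=1..t. u i)\<^sup>2 - (\<Sum>i=1..t. deficit t \<omega> u i)"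
proof -
  let ?I = "{1..t}"
  let ?E = "\<lambda>i. \<Sum>j\<in>?I - {i}. \<omega> i j * u i * u j"
  have sym: "\<omega> i j * u i * u j = \<omega> j i * u j * u i" if "i \<in> ?I" "j \<in> ?I" for i j
  proof (cases "i = j")
    case False
    then have "\<omega> i j = \<omega> j i" using wg that unfolding weighted_complete_graph_def by blast
    then show ?thesis by (simp add: mult.commute mult.left_commute)
  qed simp
  have "(\<Sum>i\<in>?I. ?E i) = 2 * (\<Sum>i\<in>?I. \<Sum>j\<in>{j\<in>?I. i < j}. \<omega> i j * u i * u j)"
    by (rule sum_off_diagonal_symmetric) (use sym in auto)
  moreover have "{j\<in>?I. i < j} = {i+1..t}" for i by auto
  ultimately have off: "2 * (\<Sum>i=1..t. \<Sum>j=i+1..t. \<omega> i j * u i * u j) = (\<Sum>i\<in>?I. ?E i)"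
    by simp
  have "u i * (\<Sum>j\<in>?I. u j) = (u i)\<^sup>2 + (\<Sum>j\<in>?I - {i}. u i * u j)" if "i \<in> ?I" for i
    by (subst sum.remove[OF _ that]) (simp_all add: power2_eq_square sum_distrib_left distrib_left)
  then have square: "(\<Sum>i\<in>?I. u i)\<^sup>2 = (\<Sum>i\<in>?I. (u i)\<^sup>2 + (\<Sum>j\<in>?I - {i}. u i * u j))"
    by (simp add: power2_eq_square sum_distrib_right)
  have "deficit t \<omega> u i = (u i)\<^sup>2 + (\<Sum>j\<in>?I - {i}. u i * u j) - ?E i" for i
    unfolding deficit_def by (simp add: algebra_simps sum_subtractf)
  then show ?thesis using off square by (simp add: sum_subtractf)
qed

definition deficit_bound :: "nat \<Rightarrow> (nat \<Rightarrow> nat \<Rightarrow> real) \<Rightarrow> nat set \<Rightarrow> real \<Rightarrow> bool" where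
  "deficit_bound t \<omega> B a \<longleftrightarrow>
     (\<forall>u l. (\<forall>i\<in>{1..t}. 0 \<le> u i) \<longrightarrow>
        2 * l * (\<Sum>i\<in>B. u i) - l\<^sup>2 * a \<le> (\<Sum>i\<in>B. deficit t \<omega> u i))"

lemma half_clique_deficit_bound:
  assumes wg: "weighted_complete_graph t \<omega>" and A: "half_clique t \<omega> k A" and k: "1 \<le> k"
  shows "deficit_bound t \<omega> A (2 * real k / (real k + 1))"
  unfolding deficit_bound_def
proof (intro allI impI)
  fix u :: "nat \<Rightarrow> real" and l :: real
  assume u: "\<forall>i\<in>{1..t}. 0 \<le> u i"
  have sub: "A \<subseteq> {1..t}" and card: "card A = k"
    and half: "\<And>i j. i \<in> A \<Longrightarrow> j \<in> A \<Longrightarrow> i \<noteq> j \<Longrightarrow> \<omega> i j = 1/2"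
    using A unfolding half_clique_def by auto
  have fin: "finite A" using sub finite_subset by blast
  define m where "m = (\<Sum>i\<in>A. u i)"
  have "(u i)\<^sup>2 + (u i * m - (u i)\<^sup>2) / 2 \<le> deficit t \<omega> u i" if i: "i \<in> A" for i
  proof -
    have "(\<Sum>j\<in>A - {i}. (1 - \<omega> i j) * u i * u j) = (\<Sum>j\<in>A - {i}. u i * u j) / 2"
      unfolding sum_divide_distrib using half i by (intro sum.cong) auto
    also have "\<dots> = (u i * m - (u i)\<^sup>2) / 2"
      using fin i by (simp add: m_def sum_distrib_left sum_diff1 power2_eq_square)
    finally have "(\<Sum>j\<in>A - {i}. (1 - \<omega> i j) * u i * u j) = (u i * m - (u i)\<^sup>2) / 2" .
    moreover have "i \<in> {1..t}" "A - {i} \<subseteq> {1..t} - {i}" using sub i by auto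
    ultimately show ?thesis using deficit_ge_partial[OF wg u, of i "A - {i}"] by linarith
  qed
  then have "(\<Sum>i\<in>A. (u i)\<^sup>2 + (u i * m - (u i)\<^sup>2) / 2) \<le> (\<Sum>i\<in>A. deficit t \<omega> u i)"
    by (rule sum_mono)
  moreover have "(\<Sum>i\<in>A. (u i)\<^sup>2 + (u i * m - (u i)\<^sup>2) / 2) = (\<Sum>i\<in>A. (u i)\<^sup>2 / 2 + m / 2 * u i)"
    by (intro sum.cong) (simp_all add: field_simps)
  moreover have "\<dots> = (\<Sum>i\<in>A. (u i)\<^sup>2) / 2 + m\<^sup>2 / 2"
    by (simp add: sum.distrib power2_eq_square m_def flip: sum_distrib_left sum_divide_distrib)
  ultimately have deficit_ge: "(\<Sum>i\<in>A. (u i)\<^sup>2) / 2 + m\<^sup>2 / 2 \<le> (\<Sum>i\<in>A. deficit t \<omega> u i)"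
    by simp
  have "2 * l * m - l\<^sup>2 * (2 * real k / (real k + 1)) \<le> (real k + 1) / (2 * real k) * m\<^sup>2"
    using two_mul_le_scaled_squares[of "(real k + 1) / (2 * real k)" l m] k by simp
  also have "\<dots> = m\<^sup>2 / k / 2 + m\<^sup>2 / 2"
    using k by (simp add: field_simps)
  also have "\<dots> \<le> (\<Sum>i\<in>A. (u i)\<^sup>2) / 2 + m\<^sup>2 / 2"
    using sum_squared_le_sum_of_squares[of u A] k card by (simp add: m_def divide_le_eq)
  finally show "2 * l * (\<Sum>i\<in>A. u i) - l\<^sup>2 * (2 * real k / (real k + 1)) \<le> (\<Sum>i\<in>A. deficit t \<omega> u i)"
    using deficit_ge unfolding m_def by linarith
qed

lemma half_C5_deficit_ge_neighbours:
  assumes wg: "weighted_complete_graph t \<omega>" and u: "\<forall>i\<in>{1..t}. 0 \<le> u i"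
    and c: "half_C5 t \<omega> c" and a: "a < 5"
  shows "(u (c a))\<^sup>2 + (u (c a) * u (c ((a + 1) mod 5)) + u (c a) * u (c ((a + 4) mod 5))) / 2
      \<le> deficit t \<omega> u (c a)"
proof -
  define b d where "b = (a + 1) mod 5" and "d = (a + 4) mod 5"
  have "b < 5" "d < 5" "b \<noteq> a" "d \<noteq> a" "b \<noteq> d" "(d + 1) mod 5 = a"
    using a unfolding b_def d_def by presburger+
  moreover have inj: "inj_on c {0..<5}" and sub: "c ` {0..<5} \<subseteq> {1..t}"
    and half: "\<And>a. a < 5 \<Longrightarrow> \<omega> (c a) (c ((a + 1) mod 5)) = 1/2"
    using c unfolding half_C5_def by auto
  ultimately have distinct: "c b \<noteq> c a" "c d \<noteq> c a" "c b \<noteq> c d"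
    and vertices: "c a \<in> {1..t}" "c b \<in> {1..t}" "c d \<in> {1..t}"
    using a by (auto dest: inj_onD simp: image_subset_iff simp del: atLeastAtMost_iff)
  have w_b: "\<omega> (c a) (c b) = 1/2" using half a unfolding b_def by blast
  have w_d: "\<omega> (c a) (c d) = 1/2"
    using half[OF \<open>d < 5\<close>] \<open>(d + 1) mod 5 = a\<close> distinct vertices wg
    unfolding weighted_complete_graph_def by metis
  have "(\<Sum>j\<in>{c b, c d}. (1 - \<omega> (c a) j) * u (c a) * u j)
      = (u (c a) * u (c b) + u (c a) * u (c d)) / 2"
    using distinct(3) by (simp add: w_b w_d)
  moreover have "(u (c a))\<^sup>2 + (\<Sum>j\<in>{c b, c d}. (1 - \<omega> (c a) j) * u (c a) * u j)
      \<le> deficit t \<omega> u (c a)"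
    by (rule deficit_ge_partial[OF wg u vertices(1)]) (use distinct vertices in auto)
  ultimately show ?thesis unfolding b_def [symmetric] d_def [symmetric] by linarith
qed

lemma half_C5_deficit_bound:
  assumes wg: "weighted_complete_graph t \<omega>" and c: "half_C5 t \<omega> c"
  shows "deficit_bound t \<omega> (c ` {0..<5}) (5 / 2)"
  unfolding deficit_bound_def
proof (intro allI impI)
  fix u :: "nat \<Rightarrow> real" and l :: real
  assume u: "\<forall>i\<in>{1..t}. 0 \<le> u i"
  have expand: "(\<Sum>i\<in>c ` {0..<5}. f i) = f (c 0) + f (c 1) + f (c 2) + f (c 3) + f (c 4)"
    for f :: "nat \<Rightarrow> real"
    using c unfolding half_C5_def by (simp add: sum.reindex atLeast0LessThan lessThan_nat_numeral)
  define y where "y a = u (c a)" for a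
  have "0 \<le> ((y 0 + y 1 - l)\<^sup>2 + (y 1 + y 2 - l)\<^sup>2 + (y 2 + y 3 - l)\<^sup>2 + (y 3 + y 4 - l)\<^sup>2
      + (y 4 + y 0 - l)\<^sup>2) / 2"
    by simp
  then have "2 * l * (y 0 + y 1 + y 2 + y 3 + y 4) - l\<^sup>2 * (5 / 2)
      \<le> ((y 0)\<^sup>2 + (y 0 * y 1 + y 0 * y 4) / 2) + ((y 1)\<^sup>2 + (y 1 * y 2 + y 1 * y 0) / 2)
        + ((y 2)\<^sup>2 + (y 2 * y 3 + y 2 * y 1) / 2) + ((y 3)\<^sup>2 + (y 3 * y 4 + y 3 * y 2) / 2)
        + ((y 4)\<^sup>2 + (y 4 * y 0 + y 4 * y 3) / 2)"
    by (simp add: power2_eq_square field_simps)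
  also have "\<dots> \<le> deficit t \<omega> u (c 0) + deficit t \<omega> u (c 1) + deficit t \<omega> u (c 2)
      + deficit t \<omega> u (c 3) + deficit t \<omega> u (c 4)"
    using half_C5_deficit_ge_neighbours[OF wg u c, of 0] half_C5_deficit_ge_neighbours[OF wg u c, of 1]
      half_C5_deficit_ge_neighbours[OF wg u c, of 2] half_C5_deficit_ge_neighbours[OF wg u c, of 3]
      half_C5_deficit_ge_neighbours[OF wg u c, of 4]
    by (simp add: y_def numeral_2_eq_2)
  finally show "2 * l * (\<Sum>i\<in>c ` {0..<5}. u i) - l\<^sup>2 * (5 / 2) \<le> (\<Sum>i\<in>c ` {0..<5}. deficit t \<omega> u i)"
    unfolding expand y_def .
qed

lemma sum_deficit_ge_of_blocks:
  assumes wg: "weighted_complete_graph t \<omega>" and u: "\<forall>i\<in>{1..t}. 0 \<le> u i"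
    and M: "finite M" and sub: "\<forall>m\<in>M. B m \<subseteq> {1..t}" and disj: "disjoint_family_on B M"
    and bound: "\<forall>m\<in>M. deficit_bound t \<omega> (B m) (a m)"
  shows "2 * l * (\<Sum>i=1..t. u i) - l\<^sup>2 * ((\<Sum>m\<in>M. a m) + card ({1..t} - \<Union>(B ` M)))
      \<le> (\<Sum>i=1..t. deficit t \<omega> u i)"
proof -
  let ?U = "{1..t} - \<Union>(B ` M)"
  have split: "(\<Sum>i=1..t. f i) = (\<Sum>m\<in>M. \<Sum>i\<in>B m. f i) + (\<Sum>i\<in>?U. f i)" for f :: "nat \<Rightarrow> real"
  proof -
    have "finite (B m)" if "m \<in> M" for m using sub that finite_subset by blast
    then have "(\<Sum>i\<in>\<Union>(B ` M). f i) = (\<Sum>m\<in>M. \<Sum>i\<in>B m. f i)"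
      using M disj by (simp add: sum.UNION_disjoint_family)
    moreover have "(\<Sum>i=1..t. f i) = (\<Sum>i\<in>?U. f i) + (\<Sum>i\<in>\<Union>(B ` M). f i)"
      using sub by (intro sum.subset_diff) auto
    ultimately show ?thesis by simp
  qed
  have "(\<Sum>m\<in>M. 2 * l * (\<Sum>i\<in>B m. u i) - l\<^sup>2 * a m) \<le> (\<Sum>m\<in>M. \<Sum>i\<in>B m. deficit t \<omega> u i)"
    using bound u unfolding deficit_bound_def by (intro sum_mono) blast
  moreover have "(\<Sum>i\<in>?U. 2 * l * u i - l\<^sup>2) \<le> (\<Sum>i\<in>?U. deficit t \<omega> u i)"
  proof (rule sum_mono)
    fix i assume "i \<in> ?U"
    then have "(u i)\<^sup>2 \<le> deficit t \<omega> u i"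
      using deficit_ge_partial[OF wg u, of i "{}"] by simp
    moreover have "2 * l * u i - l\<^sup>2 \<le> (u i)\<^sup>2"
      using two_mul_le_scaled_squares[of 1 l "u i"] by simp
    ultimately show "2 * l * u i - l\<^sup>2 \<le> deficit t \<omega> u i" by linarith
  qed
  moreover have "(\<Sum>m\<in>M. 2 * l * (\<Sum>i\<in>B m. u i) - l\<^sup>2 * a m)
      = 2 * l * (\<Sum>m\<in>M. \<Sum>i\<in>B m. u i) - l\<^sup>2 * (\<Sum>m\<in>M. a m)"
    by (simp add: sum_subtractf sum_distrib_left)
  moreover have "(\<Sum>i\<in>?U. 2 * l * u i - l\<^sup>2) = 2 * l * (\<Sum>i\<in>?U. u i) - l\<^sup>2 * card ?U"
    by (simp add: sum_subtractf sum_distrib_left)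
  moreover have "2 * l * (\<Sum>i=1..t. u i) = 2 * l * (\<Sum>m\<in>M. \<Sum>i\<in>B m. u i) + 2 * l * (\<Sum>i\<in>?U. u i)"
    using split[of u] by (simp add: distrib_left)
  ultimately show ?thesis
    using split[of "deficit t \<omega> u"] by (simp add: distrib_left)
qed

lemma two_edge_density_le_of_blocks:
  assumes t: "1 \<le> t" and wg: "weighted_complete_graph t \<omega>"
    and M: "finite M" and sub: "\<forall>m\<in>M. B m \<subseteq> {1..t}" and disj: "disjoint_family_on B M"
    and bound: "\<forall>m\<in>M. deficit_bound t \<omega> (B m) (a m)" and pos: "\<forall>m\<in>M. 0 < a m"
  shows "2 * edge_density t \<omega> \<le> 1 - 1 / (real t - (\<Sum>m\<in>M. real (card (B m)) - a m))"
proof -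
  define D where "D = real t - (\<Sum>m\<in>M. real (card (B m)) - a m)"
  have fin: "finite (B m)" if "m \<in> M" for m using sub that finite_subset by blast
  have W: "\<Union>(B ` M) \<subseteq> {1..t}" using sub by auto
  have "card (\<Union>(B ` M)) = (\<Sum>m\<in>M. card (B m))"
    using M fin disj unfolding disjoint_family_on_def by (intro card_UN_disjoint) auto
  then have "real (card ({1..t} - \<Union>(B ` M))) = real t - (\<Sum>m\<in>M. real (card (B m)))"
    using card_Diff_subset[OF _ W] card_mono[OF _ W] finite_subset[OF W]
    by (simp add: of_nat_diff flip: of_nat_sum)
  then have D_eq: "D = (\<Sum>m\<in>M. a m) + card ({1..t} - \<Union>(B ` M))"
    by (simp add: D_def sum_subtractf)
  have "0 < D"
  proof (cases "M = {}")
    case True then show ?thesis using t by (simp add: D_def)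
  next
    case False then show ?thesis unfolding D_eq using M pos by (simp add: add_pos_nonneg sum_pos)
  qed
  have density_bound: "2 * (\<Sum>i=1..t. \<Sum>j=i+1..t. \<omega> i j * u i * u j) \<le> 1 - 1 / D"
    if "u \<in> simplex t" for u
  proof -
    have u: "\<forall>i\<in>{1..t}. 0 \<le> u i" and total: "(\<Sum>i=1..t. u i) = 1"
      using that unfolding simplex_def by auto
    have "2 * (1 / D) - (1 / D)\<^sup>2 * D \<le> (\<Sum>i=1..t. deficit t \<omega> u i)"
      using sum_deficit_ge_of_blocks[OF wg u M sub disj bound, of "1 / D"] total D_eq by simp
    moreover have "2 * (1 / D) - (1 / D)\<^sup>2 * D = 1 / D"
      using \<open>0 < D\<close> by (simp add: power2_eq_square field_simps)
    ultimately show ?thesis using two_weighted_edge_sum_eq[OF wg, of u] total by simp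
  qed
  have "edge_density t \<omega> \<le> (1 - 1 / D) / 2"
    using density_bound by (intro edge_density_le[OF t]) fastforce
  then show ?thesis unfolding D_def by simp
qed

lemma half_subgraph_blocks:
  fixes C :: "nat \<Rightarrow> nat \<Rightarrow> nat" and Q R S :: "nat \<Rightarrow> nat set"
  assumes wg: "weighted_complete_graph t \<omega>"
    and "\<forall>i<p. half_C5 t \<omega> (C i)"
    and "\<forall>i<q. half_clique t \<omega> 4 (Q i)"
    and "\<forall>i<r. half_clique t \<omega> 3 (R i)"
    and "\<forall>i<s. half_clique t \<omega> 2 (S i)"
    and m: "m < p + q + r + s"
  defines "B \<equiv> \<lambda>k. if k < p then C k ` {0..<5} else if k < p + q then Q (k - p)
                  else if k < p + q + r then R (k - p - q) else S (k - p - q - r)"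
    and "a \<equiv> \<lambda>k. if k < p then 5/2 else if k < p + q then 8/5
                  else if k < p + q + r then 3/2 else (4/3 :: real)"
    and "e \<equiv> \<lambda>k. if k < p then 5/2 else if k < p + q then 12/5
                  else if k < p + q + r then 3/2 else (2/3 :: real)"
  shows "B m \<subseteq> {1..t} \<and> deficit_bound t \<omega> (B m) (a m) \<and> real (card (B m)) - a m = e m"
proof -
  consider "m < p" | "p \<le> m" "m < p + q" | "p + q \<le> m" "m < p + q + r" | "p + q + r \<le> m"
    by linarith
  then show ?thesis
  proof cases
    case 1
    with assms(2) have c: "half_C5 t \<omega> (C m)" by blast
    with 1 half_C5_deficit_bound[OF wg c] show ?thesis
      unfolding B_def a_def e_def half_C5_def by (simp add: card_image)
  next
    case 2
    with assms(3) have c: "half_clique t \<omega> 4 (Q (m - p))" by auto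
    with 2 half_clique_deficit_bound[OF wg c] show ?thesis
      unfolding B_def a_def e_def half_clique_def by simp
  next
    case 3
    with assms(4) have c: "half_clique t \<omega> 3 (R (m - p - q))" by auto
    with 3 half_clique_deficit_bound[OF wg c] show ?thesis
      unfolding B_def a_def e_def half_clique_def by simp
  next
    case 4
    with assms(5) m have c: "half_clique t \<omega> 2 (S (m - p - q - r))" by auto
    with 4 half_clique_deficit_bound[OF wg c] show ?thesis
      unfolding B_def a_def e_def half_clique_def by simp
  qed
qed

theorem mainTheorem6:
  fixes t p q r s :: nat
    and \<omega> :: "nat \<Rightarrow> nat \<Rightarrow> real"
    and C :: "nat \<Rightarrow> nat \<Rightarrow> nat"
    and Q R S :: "nat \<Rightarrow> nat set"
  assumes "t \<ge> 1"
    and "weighted_complete_graph t \<omega>"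
    and "\<forall>i<p. half_C5 t \<omega> (C i)"
    and "\<forall>i<q. half_clique t \<omega> 4 (Q i)"
    and "\<forall>i<r. half_clique t \<omega> 3 (R i)"
    and "\<forall>i<s. half_clique t \<omega> 2 (S i)"
    and "\<forall>k < p+q+r+s. \<forall>l < p+q+r+s. k \<noteq> l \<longrightarrow>
           (let V = (\<lambda>m. if m < p then C m ` {0..<5}
                         else if m < p+q then Q (m-p)
                         else if m < p+q+r then R (m-p-q)
                         else S (m-p-q-r))
            in V k \<inter> V l = {})"
  shows "2 * edge_density t \<omega> \<le>
           1 - 30 / (30 * real t - 75 * real p - 72 * real q - 45 * real r - 20 * real s)"
proof -
  define B where "B = (\<lambda>m. if m < p then C m ` {0..<5} else if m < p + q then Q (m - p)
                  else if m < p + q + r then R (m - p - q) else S (m - p - q - r))"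
  define a :: "nat \<Rightarrow> real" where "a = (\<lambda>m. if m < p then 5/2 else if m < p + q then 8/5
                  else if m < p + q + r then 3/2 else 4/3)"
  define e :: "nat \<Rightarrow> real" where "e = (\<lambda>m. if m < p then 5/2 else if m < p + q then 12/5
                  else if m < p + q + r then 3/2 else 2/3)"
  let ?M = "{..<p + q + r + s}"
  have blocks: "B m \<subseteq> {1..t} \<and> deficit_bound t \<omega> (B m) (a m) \<and> real (card (B m)) - a m = e m"
    if "m \<in> ?M" for m
    using half_subgraph_blocks[OF assms(2-6)] that unfolding B_def a_def e_def by simp
  have "disjoint_family_on B ?M"
    using assms(7) unfolding disjoint_family_on_def B_def Let_def by auto
  moreover have "(\<Sum>m\<in>?M. real (card (B m)) - a m) = 5/2 * p + 12/5 * q + 3/2 * r + 2/3 * s"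
    using blocks by (simp add: sum_lessThan_add e_def)
  ultimately have "2 * edge_density t \<omega> \<le> 1 - 1 / (real t - (5/2 * p + 12/5 * q + 3/2 * r + 2/3 * s))"
    using two_edge_density_le_of_blocks[OF assms(1,2), of ?M B a] blocks by (simp add: a_def)
  then show ?thesis by (simp add: field_simps)
qed

end
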